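(* Let $n \geq 1$ be an integer and consider Nim on the hypercube $Q_{2n+1}$ in which every edge has weight $1$, with the playing piece $\Delta$ starting at the vertex $\emptyset$. Then the first player $P_1$ has a winning strategy.
   Context: Nim on a graph: two players agree on a finite simple undirected graph $G$ whose edges carry positive integer weights, and a starting vertex on which a playing piece $\Delta$ is placed. Players $P_1$ (who moves first) and $P_2$ alternate. On a turn, the player chooses an edge of positive weight incident with the vertex currently holding $\Delta$, lowers that edge's weight by a positive integer amount, and moves $\Delta$ to the other endpoint of that edge. Edges of weight $0$ are no longer playable. A player who cannot move (no playable edge is incident with $\Delta$) loses. With unit weight, each edge can be traversed at most once in total. The hypercube $Q_m$ has as vertices the subsets $X \subseteq \{1,\dots,m\}$, two vertices being adjacent iff they differ in exactly one element; $\emptyset$ denotes the empty set (by vertex-transitivity the choice of starting vertex is immaterial). *)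

theory Defs
  imports Main
begin

text \<open>A graph is given by its edge set E, a set of 2-element
vertex sets (finite simple undirected graph). A position is the vertex holding
the playing piece together with the current weight function on edges.\<close>

definition nim_move ::
  "'a set set \<Rightarrow> ('a \<times> ('a set \<Rightarrow> nat)) \<Rightarrow> ('a \<times> ('a set \<Rightarrow> nat)) \<Rightarrow> bool" where
  "nim_move E p q \<longleftrightarrow>
     (\<exists>u d. u \<noteq> fst p \<and> {fst p, u} \<in> E \<and> 0 < snd p {fst p, u} \<and>
            0 < d \<and> d \<le> snd p {fst p, u} \<and>
            q = (u, (snd p)({fst p, u} := snd p {fst p, u} - d)))"

text \<open>Least fixed point = winning in finitely many moves.\<close>

inductive nim_win and nim_lose for E :: "'a set set" where
  win_intro: "nim_move E p q \<Longrightarrow> nim_lose E q \<Longrightarrow> nim_win E p"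
| lose_intro: "(\<And>q. nim_move E p q \<Longrightarrow> nim_win E q) \<Longrightarrow> nim_lose E p"

definition hypercube_edges :: "nat \<Rightarrow> nat set set set" where
  "hypercube_edges m = {{X, Y} | X Y. X \<subseteq> {1..m} \<and> Y \<subseteq> {1..m} \<and>
                         card ((X - Y) \<union> (Y - X)) = 1}"

definition unit_weights :: "'a set set \<Rightarrow> 'a set \<Rightarrow> nat" where
  "unit_weights E = (\<lambda>e. if e \<in> E then 1 else 0)"

end

theory Submission imports Defs begin

text \<open>Player 1 keeps the piece on the three lowest levels of the cube. From \<open>\<emptyset>\<close> he moves along
an unused spoke \<open>\<emptyset>\<close>--\<open>{i}\<close>; one exists because, at his turns at \<open>\<emptyset>\<close>, an even number of the
odd number of spokes is used. When Player 2 moves from \<open>{i}\<close> up to \<open>{i,j}\<close>, Player 1 answers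
along \<open>{i,j}\<close>--\<open>{j}\<close>, which is unused because he maintains that every vertex \<open>{a,b}\<close> has either
both or neither of its edges to \<open>{a}\<close> and \<open>{b}\<close> used. So Player 1 always has a move, and as
every move lowers the total weight, Player 2 eventually gets stuck.\<close>

lemma nim_move_sum_less:
  assumes "finite E" and "nim_move E p q"
  shows "(\<Sum>e\<in>E. snd q e) < (\<Sum>e\<in>E. snd p e)"
proof -
  obtain u d where e: "{fst p, u} \<in> E" and d: "0 < d" "d \<le> snd p {fst p, u}"
    and q: "q = (u, (snd p)({fst p, u} := snd p {fst p, u} - d))"
    using assms(2) unfolding nim_move_def by blast
  show ?thesis
    using sum_strict_mono_ex1[OF assms(1), of "snd q" "snd p"] e d q by auto
qed

lemma nim_win_lose_by_invariants:
  assumes "finite E"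
    and win_step: "\<And>p. W p \<Longrightarrow> \<exists>q. nim_move E p q \<and> L q"
    and lose_step: "\<And>p q. L p \<Longrightarrow> nim_move E p q \<Longrightarrow> W q"
  shows "(W p \<longrightarrow> nim_win E p) \<and> (L p \<longrightarrow> nim_lose E p)"
proof (induction p rule: measure_induct_rule[where f = "\<lambda>p. \<Sum>e\<in>E. snd p e"])
  case (less p)
  then have IH: "W q \<Longrightarrow> nim_win E q" "L q \<Longrightarrow> nim_lose E q" if "nim_move E p q" for q
    using nim_move_sum_less[OF assms(1) that] by blast+
  show ?case
  proof (intro conjI impI)
    assume "W p"
    then obtain q where "nim_move E p q" and "L q" using win_step by blast
    then show "nim_win E p" using IH(2) by (blast intro: win_intro)
  next
    assume "L p"
    then show "nim_lose E p" using lose_step IH(1) by (blast intro: lose_intro)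
  qed
qed

lemma le_unit_weightsD:
  assumes "w \<le> unit_weights E" and "0 < w e"
  shows "e \<in> E" and "w e = 1"
  using assms le_funD[OF assms(1), of e] unfolding unit_weights_def by (auto split: if_splits)

lemma le_unit_weights_upd_zero: "w \<le> unit_weights E \<Longrightarrow> w(e := 0) \<le> unit_weights E"
  by (simp add: le_fun_def)

lemma nim_move_le_unit_weights:
  assumes "w \<le> unit_weights E"
  shows "nim_move E (c, w) q \<longleftrightarrow>
           (\<exists>u. u \<noteq> c \<and> {c, u} \<in> E \<and> 0 < w {c, u} \<and> q = (u, w({c, u} := 0)))"
proof
  assume "nim_move E (c, w) q"
  then obtain u d where u: "u \<noteq> c" "{c, u} \<in> E" "0 < w {c, u}" "0 < d" "d \<le> w {c, u}"
    and q: "q = (u, w({c, u} := w {c, u} - d))"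
    unfolding nim_move_def by auto
  moreover have "w {c, u} - d = 0"
    using le_unit_weightsD(2)[OF assms u(3)] u(4) by simp
  ultimately show "\<exists>u. u \<noteq> c \<and> {c, u} \<in> E \<and> 0 < w {c, u} \<and> q = (u, w({c, u} := 0))"
    by auto
next
  assume "\<exists>u. u \<noteq> c \<and> {c, u} \<in> E \<and> 0 < w {c, u} \<and> q = (u, w({c, u} := 0))"
  then obtain u where "u \<noteq> c" "{c, u} \<in> E" "0 < w {c, u}" "q = (u, w({c, u} := 0))"
    by blast
  then show "nim_move E (c, w) q"
    unfolding nim_move_def using le_unit_weightsD(2)[OF assms]
    by (intro exI[of _ u] exI[of _ "w {c, u}"]) auto
qed

lemma hypercube_edge_iff:
  "{X, Y} \<in> hypercube_edges m \<longleftrightarrow>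
     X \<subseteq> {1..m} \<and> Y \<subseteq> {1..m} \<and> card ((X - Y) \<union> (Y - X)) = 1"
  unfolding hypercube_edges_def by (auto simp: doubleton_eq_iff Un_commute)

lemma finite_hypercube_edges: "finite (hypercube_edges m)"
proof (rule finite_subset)
  show "hypercube_edges m \<subseteq> Pow (Pow {1..m})"
    unfolding hypercube_edges_def by auto
qed simp

lemma hypercube_edge_spoke_iff: "{{}, {i}} \<in> hypercube_edges m \<longleftrightarrow> i \<in> {1..m}"
  by (simp add: hypercube_edge_iff)

lemma hypercube_edge_lower_iff:
  assumes "a \<noteq> b"
  shows "{{a}, {a, b}} \<in> hypercube_edges m \<longleftrightarrow> a \<in> {1..m} \<and> b \<in> {1..m}"
proof -
  have "({a} - {a, b}) \<union> ({a, b} - {a}) = {b}" using assms by auto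
  then show ?thesis by (auto simp: hypercube_edge_iff)
qed

lemma hypercube_singleton_neighbour:
  assumes "{{i}, Y} \<in> hypercube_edges m"
  shows "Y = {} \<or> (\<exists>j. j \<noteq> i \<and> Y = {i, j})"
proof -
  obtain k where k: "({i} - Y) \<union> (Y - {i}) = {k}"
    using assms by (auto simp: hypercube_edge_iff card_1_singleton_iff)
  show ?thesis
  proof (cases "i \<in> Y")
    case True
    with k have "Y = {i, k}" and "k \<noteq> i" by auto
    then show ?thesis by blast
  next
    case False
    with k show ?thesis by auto
  qed
qed

text \<open>The spokes are the edges \<open>{\<emptyset>, {i}}\<close>; the lower edges of \<open>{a, b}\<close> are
\<open>{{a}, {a, b}}\<close> and \<open>{{b}, {a, b}}\<close>.\<close>

definition spent_spokes :: "nat \<Rightarrow> (nat set set \<Rightarrow> nat) \<Rightarrow> nat set" where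
  "spent_spokes m w = {i \<in> {1..m}. w {{}, {i}} = 0}"

lemma finite_spent_spokes: "finite (spent_spokes m w)"
  unfolding spent_spokes_def by simp

lemma spent_spokes_upd_spoke:
  assumes "i \<in> {1..m}"
  shows "spent_spokes m (w({{}, {i}} := 0)) = insert i (spent_spokes m w)"
proof -
  have "{{}, {j}} = {{}, {i}} \<longleftrightarrow> j = i" for j :: nat by (auto simp: doubleton_eq_iff)
  then show ?thesis using assms unfolding spent_spokes_def by auto
qed

lemma spent_spokes_upd_nonspoke: "{} \<notin> e \<Longrightarrow> spent_spokes m (w(e := x)) = spent_spokes m w"
  unfolding spent_spokes_def by auto

definition balanced_except :: "(nat set set \<Rightarrow> nat) \<Rightarrow> nat set set \<Rightarrow> bool" where
  "balanced_except w C \<longleftrightarrow>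
     (\<forall>a b. a \<noteq> b \<longrightarrow> {a, b} \<notin> C \<longrightarrow> (w {{a}, {a, b}} = 0 \<longleftrightarrow> w {{b}, {a, b}} = 0))"

lemma balanced_exceptI:
  "(\<And>a b. a \<noteq> b \<Longrightarrow> {a, b} \<notin> C \<Longrightarrow> w {{a}, {a, b}} = 0 \<longleftrightarrow> w {{b}, {a, b}} = 0)
   \<Longrightarrow> balanced_except w C"
  unfolding balanced_except_def by blast

lemma balanced_exceptD:
  "balanced_except w C \<Longrightarrow> a \<noteq> b \<Longrightarrow> {a, b} \<notin> C \<Longrightarrow> w {{a}, {a, b}} = 0 \<longleftrightarrow> w {{b}, {a, b}} = 0"
  unfolding balanced_except_def by blast

lemma balanced_except_mono: "C \<subseteq> D \<Longrightarrow> balanced_except w C \<Longrightarrow> balanced_except w D"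
  unfolding balanced_except_def by blast

lemma balanced_except_upd:
  assumes "balanced_except w C"
    and "\<And>a b. a \<noteq> b \<Longrightarrow> {a, b} \<notin> C \<Longrightarrow> e \<noteq> {{a}, {a, b}}"
  shows "balanced_except (w(e := x)) C"
proof (rule balanced_exceptI)
  fix a b :: nat assume ab: "a \<noteq> b" "{a, b} \<notin> C"
  moreover have "{b, a} = {a, b}" by blast
  ultimately have "e \<noteq> {{a}, {a, b}}" "e \<noteq> {{b}, {a, b}}"
    using assms(2)[of a b] assms(2)[of b a] by metis+
  then show "(w(e := x)) {{a}, {a, b}} = 0 \<longleftrightarrow> (w(e := x)) {{b}, {a, b}} = 0"
    using balanced_exceptD[OF assms(1) ab] by simp
qed

lemma balanced_except_upd_spoke:
  "balanced_except w C \<Longrightarrow> balanced_except (w({{}, X} := x)) C"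
  by (rule balanced_except_upd) (auto simp: doubleton_eq_iff)

lemma balanced_except_upd_lower:
  assumes "{a, b} \<in> C" and "balanced_except w C"
  shows "balanced_except (w({{a}, {a, b}} := x)) C"
  using assms by (intro balanced_except_upd) (auto simp: doubleton_eq_iff)

lemma balanced_except_close:
  assumes bal: "balanced_except w (insert {a, b} C)" and a: "w {{a}, {a, b}} = 0" and "a \<noteq> b"
  shows "balanced_except (w({{b}, {a, b}} := 0)) C"
proof (rule balanced_exceptI)
  fix x y :: nat assume xy: "x \<noteq> y" "{x, y} \<notin> C"
  show "(w({{b}, {a, b}} := 0)) {{x}, {x, y}} = 0 \<longleftrightarrow> (w({{b}, {a, b}} := 0)) {{y}, {x, y}} = 0"
  proof (cases "{x, y} = {a, b}")
    case True
    have "{{a}, {a, b}} \<noteq> {{b}, {a, b}}" using \<open>a \<noteq> b\<close> by (auto simp: doubleton_eq_iff)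
    then have "(w({{b}, {a, b}} := 0)) {{a}, {a, b}} = 0" "(w({{b}, {a, b}} := 0)) {{b}, {a, b}} = 0"
      using a by simp_all
    moreover have "x = a \<and> y = b \<or> x = b \<and> y = a" using True by (simp add: doubleton_eq_iff)
    moreover have "{b, a} = {a, b}" by blast
    ultimately show ?thesis by (elim disjE conjE) simp_all
  next
    case False
    then have "{{x}, {x, y}} \<noteq> {{b}, {a, b}}" "{{y}, {x, y}} \<noteq> {{b}, {a, b}}"
      by (auto simp: doubleton_eq_iff)
    then show ?thesis using balanced_exceptD[OF bal xy(1)] xy(2) False by simp
  qed
qed

definition win_config :: "nat \<Rightarrow> nat set \<times> (nat set set \<Rightarrow> nat) \<Rightarrow> bool" where
  "win_config m = (\<lambda>(c, w). w \<le> unit_weights (hypercube_edges m) \<and>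
     (c = {} \<and> balanced_except w {} \<and> even (card (spent_spokes m w)) \<or>
      (\<exists>a b. a \<noteq> b \<and> c = {a, b} \<and> balanced_except w {c} \<and>
             w {{a}, c} = 0 \<and> 0 < w {{b}, c} \<and> odd (card (spent_spokes m w)))))"

definition lose_config :: "nat \<Rightarrow> nat set \<times> (nat set set \<Rightarrow> nat) \<Rightarrow> bool" where
  "lose_config m = (\<lambda>(c, w). w \<le> unit_weights (hypercube_edges m) \<and> (\<exists>i. c = {i}) \<and>
     balanced_except w {} \<and> odd (card (spent_spokes m w)))"

lemma win_config_move_from_root:
  assumes "odd m" and w: "w \<le> unit_weights (hypercube_edges m)"
    and bal: "balanced_except w {}" and even: "even (card (spent_spokes m w))"
  obtains i where "{{}, {i}} \<in> hypercube_edges m" and "0 < w {{}, {i}}"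
    and "lose_config m ({i}, w({{}, {i}} := 0))"
proof -
  have "spent_spokes m w \<noteq> {1..m}" using \<open>odd m\<close> even by auto
  moreover have "spent_spokes m w \<subseteq> {1..m}" unfolding spent_spokes_def by auto
  ultimately obtain i where i: "i \<in> {1..m}" "i \<notin> spent_spokes m w" by blast
  show ?thesis
  proof (rule that)
    show "{{}, {i}} \<in> hypercube_edges m" using i(1) by (simp add: hypercube_edge_spoke_iff)
    show "0 < w {{}, {i}}" using i unfolding spent_spokes_def by simp
    show "lose_config m ({i}, w({{}, {i}} := 0))"
      using i even le_unit_weights_upd_zero[OF w] balanced_except_upd_spoke[OF bal]
      by (simp add: lose_config_def spent_spokes_upd_spoke finite_spent_spokes)
  qed
qed

lemma win_config_move_from_pair:
  assumes "a \<noteq> b" and w: "w \<le> unit_weights (hypercube_edges m)"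
    and "balanced_except w {{a, b}}" and "w {{a}, {a, b}} = 0"
    and "odd (card (spent_spokes m w))"
  shows "lose_config m ({b}, w({{b}, {a, b}} := 0))"
  using assms le_unit_weights_upd_zero[OF w] balanced_except_close[of w a b "{}"]
  by (simp add: lose_config_def spent_spokes_upd_nonspoke)

lemma win_config_move:
  assumes "odd m" and "win_config m (c, w)"
  shows "\<exists>q. nim_move (hypercube_edges m) (c, w) q \<and> lose_config m q"
proof -
  have w: "w \<le> unit_weights (hypercube_edges m)" using assms(2) by (simp add: win_config_def)
  from assms(2) consider
      (root) "c = {}" "balanced_except w {}" "even (card (spent_spokes m w))"
    | (pair) a b where "a \<noteq> b" "c = {a, b}" "balanced_except w {{a, b}}" "w {{a}, {a, b}} = 0"
        "0 < w {{b}, {a, b}}" "odd (card (spent_spokes m w))"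
    unfolding win_config_def by auto
  then show ?thesis
  proof cases
    case root
    with win_config_move_from_root[OF assms(1) w] obtain i where
      i: "{{}, {i}} \<in> hypercube_edges m" "0 < w {{}, {i}}" "lose_config m ({i}, w({{}, {i}} := 0))"
      by blast
    have "nim_move (hypercube_edges m) (c, w) ({i}, w({{}, {i}} := 0))"
      unfolding nim_move_le_unit_weights[OF w] using root(1) i(1,2) by simp
    with i(3) show ?thesis by blast
  next
    case pair
    have e: "{c, {b}} = {{b}, {a, b}}" and "{b} \<noteq> c" using pair(1,2) by auto
    have "nim_move (hypercube_edges m) (c, w) ({b}, w({{b}, {a, b}} := 0))"
      unfolding nim_move_le_unit_weights[OF w]
      using \<open>{b} \<noteq> c\<close> le_unit_weightsD(1)[OF w pair(5)] pair(5)
      by (intro exI[of _ "{b}"]) (simp add: e)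
    with win_config_move_from_pair[OF pair(1) w pair(3,4,6)] show ?thesis by blast
  qed
qed

lemma lose_config_move:
  assumes "lose_config m (c, w)" and "nim_move (hypercube_edges m) (c, w) q"
  shows "win_config m q"
proof -
  obtain i where c: "c = {i}" and w: "w \<le> unit_weights (hypercube_edges m)"
    and bal: "balanced_except w {}" and odd: "odd (card (spent_spokes m w))"
    using assms(1) by (auto simp: lose_config_def)
  obtain u where edge: "{c, u} \<in> hypercube_edges m" and pos: "0 < w {c, u}"
    and q: "q = (u, w({c, u} := 0))"
    using assms(2) by (auto simp: nim_move_le_unit_weights[OF w])
  consider "u = {}" | j where "j \<noteq> i" "u = {i, j}"
    using hypercube_singleton_neighbour edge c by blast
  then show ?thesis
  proof cases
    case 1
    then have e: "{c, u} = {{}, {i}}" using c by auto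
    then have "i \<in> {1..m}" "i \<notin> spent_spokes m w"
      using edge pos by (auto simp: hypercube_edge_spoke_iff spent_spokes_def)
    then show ?thesis
      using 1 q e odd le_unit_weights_upd_zero[OF w] balanced_except_upd_spoke[OF bal]
      by (simp add: win_config_def spent_spokes_upd_spoke finite_spent_spokes)
  next
    case 2
    then have e: "{c, u} = {{i}, {i, j}}" using c by simp
    have "0 < w {{j}, {i, j}}"
      using balanced_exceptD[OF bal 2(1)] pos e by (simp add: insert_commute)
    moreover have "{{j}, {i, j}} \<noteq> {{i}, {i, j}}" using 2(1) by (auto simp: doubleton_eq_iff)
    moreover have "balanced_except (w({{i}, {i, j}} := 0)) {{i, j}}"
      using balanced_except_upd_lower[OF _ balanced_except_mono[OF _ bal]] by blast
    ultimately show ?thesis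
      using 2 q e odd le_unit_weights_upd_zero[OF w]
      by (simp add: win_config_def spent_spokes_upd_nonspoke) blast
  qed
qed

lemma win_config_initial: "win_config m ({}, unit_weights (hypercube_edges m))"
proof -
  let ?w = "unit_weights (hypercube_edges m)"
  have "spent_spokes m ?w = {}"
    unfolding spent_spokes_def unit_weights_def by (simp add: hypercube_edge_spoke_iff)
  moreover have "balanced_except ?w {}"
  proof (rule balanced_exceptI)
    fix a b :: nat assume "a \<noteq> b"
    then have "{{a}, {a, b}} \<in> hypercube_edges m \<longleftrightarrow> {{b}, {a, b}} \<in> hypercube_edges m"
      using hypercube_edge_lower_iff[of a b m] hypercube_edge_lower_iff[of b a m]
      by (auto simp: insert_commute)
    then show "?w {{a}, {a, b}} = 0 \<longleftrightarrow> ?w {{b}, {a, b}} = 0"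
      by (simp add: unit_weights_def)
  qed
  ultimately show ?thesis by (simp add: win_config_def)
qed

theorem mainTheorem2:
  fixes n :: nat
  assumes "n \<ge> 1"
  shows "nim_win (hypercube_edges (2 * n + 1))
           ({} :: nat set, unit_weights (hypercube_edges (2 * n + 1)))"
proof -
  let ?m = "2 * n + 1"
  \<comment> \<open>only the oddness of the dimension is used\<close>
  have "(win_config ?m p \<longrightarrow> nim_win (hypercube_edges ?m) p) \<and>
        (lose_config ?m p \<longrightarrow> nim_lose (hypercube_edges ?m) p)" for p
    by (rule nim_win_lose_by_invariants[OF finite_hypercube_edges])
      (use win_config_move lose_config_move in force)+
  then show ?thesis using win_config_initial by blast
qed

end
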